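(* Let $G$ and $H$ be two graphs of orders $m$ and $n$ respectively such that $E(G)\neq\emptyset$ and $E(H)\neq\emptyset$. Then $\chi_{ei}(G\vee H)=m+n$.
   Context: All graphs are finite and simple. A path $P_4$ in $G$ is a sequence $uxyv$ of four distinct vertices with $ux,xy,yv\in E(G)$; $u,v$ are its end vertices. An $e$-injective $k$-coloring of $G$ is a function $f:V(G)\to\{1,\dots,k\}$ with $f(u)\ne f(v)$ whenever $u,v$ are the end vertices of some path $P_4$ in $G$; $\chi_{ei}(G)$ is the least such $k$. The join $G\vee H$ is the graph obtained from the disjoint union of $G$ and $H$ by adding all edges $xy$ with $x\in V(G)$, $y\in V(H)$. *)

theory Defs
  imports Main
begin

definition simple_graph :: "'a set \<Rightarrow> ('a \<Rightarrow> 'a \<Rightarrow> bool) \<Rightarrow> bool" where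
  "simple_graph V E \<longleftrightarrow> finite V \<and> (\<forall>x y. E x y \<longrightarrow> x \<in> V \<and> y \<in> V)
     \<and> (\<forall>x y. E x y \<longrightarrow> E y x) \<and> (\<forall>x. \<not> E x x)"

definition has_edge :: "'a set \<Rightarrow> ('a \<Rightarrow> 'a \<Rightarrow> bool) \<Rightarrow> bool" where
  "has_edge V E \<longleftrightarrow> (\<exists>x\<in>V. \<exists>y\<in>V. E x y)"

definition join_verts :: "'a set \<Rightarrow> 'b set \<Rightarrow> ('a + 'b) set" where
  "join_verts V W = Inl ` V \<union> Inr ` W"

fun join_edge :: "'a set \<Rightarrow> ('a \<Rightarrow> 'a \<Rightarrow> bool) \<Rightarrow> 'b set \<Rightarrow> ('b \<Rightarrow> 'b \<Rightarrow> bool)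
    \<Rightarrow> ('a + 'b) \<Rightarrow> ('a + 'b) \<Rightarrow> bool" where
  "join_edge V E W F (Inl x) (Inl y) = E x y"
| "join_edge V E W F (Inr x) (Inr y) = F x y"
| "join_edge V E W F (Inl x) (Inr y) = (x \<in> V \<and> y \<in> W)"
| "join_edge V E W F (Inr x) (Inl y) = (x \<in> W \<and> y \<in> V)"

definition P4_ends :: "'a set \<Rightarrow> ('a \<Rightarrow> 'a \<Rightarrow> bool) \<Rightarrow> 'a \<Rightarrow> 'a \<Rightarrow> bool" where
  "P4_ends V E u v \<longleftrightarrow> (\<exists>x y. distinct [u, x, y, v] \<and> u \<in> V \<and> x \<in> V \<and> y \<in> V \<and> v \<in> V
       \<and> E u x \<and> E x y \<and> E y v)"

definition ei_coloring :: "'a set \<Rightarrow> ('a \<Rightarrow> 'a \<Rightarrow> bool) \<Rightarrow> nat \<Rightarrow> ('a \<Rightarrow> nat) \<Rightarrow> bool" where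
  "ei_coloring V E k f \<longleftrightarrow> (\<forall>v\<in>V. f v \<in> {1..k})
      \<and> (\<forall>u v. P4_ends V E u v \<longrightarrow> f u \<noteq> f v)"

definition chi_ei :: "'a set \<Rightarrow> ('a \<Rightarrow> 'a \<Rightarrow> bool) \<Rightarrow> nat" where
  "chi_ei V E = (LEAST k. \<exists>f. ei_coloring V E k f)"

end

theory Submission
  imports Defs
begin

text \<open>In the join, any two distinct vertices are the end vertices of a path \<open>P\<^sub>4\<close>: two
  vertices on the same side are connected through an edge of the other side, and a vertex
  \<open>u\<close> of \<open>G\<close> and a vertex \<open>v\<close> of \<open>H\<close> through \<open>u x y v\<close> with \<open>x \<noteq> v\<close> in \<open>H\<close> and \<open>y \<noteq> u\<close> in \<open>G\<close>,
  which exist since each side has an edge. So an e-injective colouring of \<open>G \<or> H\<close> must be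
  injective, while every injective colouring with \<open>m + n\<close> colours is e-injective.\<close>

lemma ei_coloring_of_bij:
  assumes "bij_betw f V {1..card V}"
  shows "ei_coloring V E (card V) f"
  using assms unfolding ei_coloring_def P4_ends_def bij_betw_def inj_on_def by auto

lemma ex_ei_coloring_card:
  assumes "finite V"
  shows "\<exists>f. ei_coloring V E (card V) f"
proof -
  obtain h where "bij_betw h V {0..<card V}"
    using ex_bij_betw_finite_nat[OF assms] by blast
  then have "bij_betw (Suc \<circ> h) V {1..card V}"
    by (rule bij_betw_trans) (simp add: bij_betw_Suc atLeastLessThanSuc_atLeastAtMost)
  then show ?thesis
    using ei_coloring_of_bij by blast
qed

lemma card_le_ei_coloring:
  assumes "\<And>u v. u \<in> V \<Longrightarrow> v \<in> V \<Longrightarrow> u \<noteq> v \<Longrightarrow> P4_ends V E u v"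
    and "ei_coloring V E k f"
  shows "card V \<le> k"
proof -
  have "inj_on f V"
    using assms unfolding ei_coloring_def inj_on_def by blast
  moreover have "f ` V \<subseteq> {1..k}"
    using assms(2) unfolding ei_coloring_def by auto
  ultimately have "card V \<le> card {1..k}"
    by (rule card_inj_on_le) simp
  then show ?thesis
    by simp
qed

lemma chi_ei_eq_card:
  assumes "finite V"
    and "\<And>u v. u \<in> V \<Longrightarrow> v \<in> V \<Longrightarrow> u \<noteq> v \<Longrightarrow> P4_ends V E u v"
  shows "chi_ei V E = card V"
  unfolding chi_ei_def
proof (rule Least_equality)
  show "\<exists>f. ei_coloring V E (card V) f"
    using ex_ei_coloring_card[OF assms(1)] .
  show "card V \<le> k" if "\<exists>f. ei_coloring V E k f" for k
    using that card_le_ei_coloring[OF assms(2)] by blast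
qed

lemma card_join_verts:
  assumes "finite V" and "finite W"
  shows "card (join_verts V W) = card V + card W"
  unfolding join_verts_def
  using assms by (subst card_Un_disjoint) (auto simp: card_image)

lemma P4_ends_join_Inl_Inl:
  assumes "u \<in> V" "v \<in> V" "u \<noteq> v" "c \<in> W" "d \<in> W" "c \<noteq> d" "F c d"
  shows "P4_ends (join_verts V W) (join_edge V E W F) (Inl u) (Inl v)"
  unfolding P4_ends_def join_verts_def
  using assms by (intro exI[of _ "Inr c"] exI[of _ "Inr d"]) auto

lemma P4_ends_join_Inr_Inr:
  assumes "u \<in> W" "v \<in> W" "u \<noteq> v" "a \<in> V" "b \<in> V" "a \<noteq> b" "E a b"
  shows "P4_ends (join_verts V W) (join_edge V E W F) (Inr u) (Inr v)"
  unfolding P4_ends_def join_verts_def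
  using assms by (intro exI[of _ "Inl a"] exI[of _ "Inl b"]) auto

lemma P4_ends_join_Inl_Inr:
  assumes "u \<in> V" "y \<in> V" "y \<noteq> u" "v \<in> W" "x \<in> W" "x \<noteq> v"
  shows "P4_ends (join_verts V W) (join_edge V E W F) (Inl u) (Inr v)"
  unfolding P4_ends_def join_verts_def
  using assms by (intro exI[of _ "Inr x"] exI[of _ "Inl y"]) auto

lemma P4_ends_join_Inr_Inl:
  assumes "u \<in> W" "y \<in> W" "y \<noteq> u" "v \<in> V" "x \<in> V" "x \<noteq> v"
  shows "P4_ends (join_verts V W) (join_edge V E W F) (Inr u) (Inl v)"
  unfolding P4_ends_def join_verts_def
  using assms by (intro exI[of _ "Inl x"] exI[of _ "Inr y"]) auto

lemma has_edgeE:
  assumes "simple_graph V E" and "has_edge V E"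
  obtains a b where "a \<in> V" "b \<in> V" "a \<noteq> b" "E a b"
  using assms unfolding simple_graph_def has_edge_def by blast

lemma P4_ends_join:
  assumes "simple_graph V E" and "simple_graph W F"
    and "has_edge V E" and "has_edge W F"
    and "u \<in> join_verts V W" "v \<in> join_verts V W" "u \<noteq> v"
  shows "P4_ends (join_verts V W) (join_edge V E W F) u v"
proof -
  obtain a b where ab: "a \<in> V" "b \<in> V" "a \<noteq> b" "E a b"
    using has_edgeE[OF assms(1,3)] .
  obtain c d where cd: "c \<in> W" "d \<in> W" "c \<noteq> d" "F c d"
    using has_edgeE[OF assms(2,4)] .
  have other_V: "\<exists>y\<in>V. y \<noteq> z" for z
    using ab by metis
  have other_W: "\<exists>y\<in>W. y \<noteq> z" for z
    using cd by metis
  from assms(5,6) consider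
      (Inl_Inl) u' v' where "u = Inl u'" "v = Inl v'" "u' \<in> V" "v' \<in> V"
    | (Inr_Inr) u' v' where "u = Inr u'" "v = Inr v'" "u' \<in> W" "v' \<in> W"
    | (Inl_Inr) u' v' where "u = Inl u'" "v = Inr v'" "u' \<in> V" "v' \<in> W"
    | (Inr_Inl) u' v' where "u = Inr u'" "v = Inl v'" "u' \<in> W" "v' \<in> V"
    unfolding join_verts_def by blast
  then show ?thesis
  proof cases
    case Inl_Inl
    with assms(7) cd show ?thesis
      by (simp add: P4_ends_join_Inl_Inl)
  next
    case Inr_Inr
    with assms(7) ab show ?thesis
      by (simp add: P4_ends_join_Inr_Inr)
  next
    case Inl_Inr
    moreover obtain y where "y \<in> V" "y \<noteq> u'"
      using other_V by blast
    moreover obtain x where "x \<in> W" "x \<noteq> v'"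
      using other_W by blast
    ultimately show ?thesis
      by (simp add: P4_ends_join_Inl_Inr)
  next
    case Inr_Inl
    moreover obtain y where "y \<in> W" "y \<noteq> u'"
      using other_W by blast
    moreover obtain x where "x \<in> V" "x \<noteq> v'"
      using other_V by blast
    ultimately show ?thesis
      by (simp add: P4_ends_join_Inr_Inl)
  qed
qed

theorem proposition2p6:
  fixes V :: "'a set" and E :: "'a \<Rightarrow> 'a \<Rightarrow> bool"
    and W :: "'b set" and F :: "'b \<Rightarrow> 'b \<Rightarrow> bool"
  assumes "simple_graph V E" and "simple_graph W F"
    and "card V = m" and "card W = n"
    and "has_edge V E" and "has_edge W F"
  shows "chi_ei (join_verts V W) (join_edge V E W F) = m + n"
proof -
  have fin: "finite V" "finite W"
    using assms(1,2) unfolding simple_graph_def by auto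
  have "chi_ei (join_verts V W) (join_edge V E W F) = card (join_verts V W)"
    using fin P4_ends_join[OF assms(1,2,5,6)]
    by (intro chi_ei_eq_card) (auto simp: join_verts_def)
  also have "\<dots> = m + n"
    using card_join_verts[OF fin] assms(3,4) by simp
  finally show ?thesis .
qed

end
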